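(* Let $q>0$ and $r\ge 0$ be real numbers. For every integer $n\ge 0$, $$\sum_{j=0}^n (-1)^n\, w(n,j)\,B_j^q(r)=\frac{n!}{n+1},$$ where $w(n,j)=w_{q,r}(n,j)$ and $B_j^q(r)$ are as defined in the context.
   Context: The Bernoulli polynomials with a $q$ parameter $B_n^q(r)$ are defined by the formal power series identity in $t$ $$\sum_{n=0}^{\infty}B_n^q(r)\frac{t^n}{n!}=\frac{q\,e^{rt}}{1-e^{qt}}\sum_{k=1}^{\infty}\left(\frac{1-e^{qt}}{q}\right)^k\frac{1}{k}.$$ Let $(x)_k=x(x-1)\cdots(x-k+1)$ denote the falling factorial ($(x)_0=1$). The $r$-Whitney numbers of the first kind $w(n,k)=w_{q,r}(n,k)$, $0\le k\le n$, are defined by the polynomial identity in $x$: $q^n(x)_n=\sum_{k=0}^n w(n,k)\,(qx+r)^k$. *)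

theory Defs
  imports "HOL-Analysis.Analysis" "HOL-Computational_Algebra.Formal_Power_Series"
begin

definition falling :: "real \<Rightarrow> nat \<Rightarrow> real" where
  "falling x k = (\<Prod>i<k. x - of_nat i)"

definition bq_u :: "real \<Rightarrow> real fps" where
  "bq_u q = fps_const (1 / q) * (1 - fps_exp q)"

text \<open>The formal sum S = sum_{k>=1} u^k / k. Since u has zero constant term,
  u^k has order at least k, so the n-th coefficient of S is the finite sum below.\<close>
definition bq_S :: "real \<Rightarrow> real fps" where
  "bq_S q = Abs_fps (\<lambda>n. \<Sum>k\<in>{1..n}. fps_nth (bq_u q ^ k) n / of_nat k)"

text \<open>Exponential generating function q e^{rt}/(1-e^{qt}) * S (exact fps division).\<close>
definition bq_egf :: "real \<Rightarrow> real \<Rightarrow> real fps" where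
  "bq_egf q r = (fps_const q * fps_exp r * bq_S q) / (1 - fps_exp q)"

definition bernoulli_q :: "real \<Rightarrow> nat \<Rightarrow> real \<Rightarrow> real" where
  "bernoulli_q q n r = fact n * fps_nth (bq_egf q r) n"

definition whitney1 :: "real \<Rightarrow> real \<Rightarrow> nat \<Rightarrow> nat \<Rightarrow> real" where
  "whitney1 q r n = (THE w. (\<forall>k>n. w k = 0) \<and>
      (\<forall>x. q ^ n * falling x n = (\<Sum>k\<le>n. w k * (q * x + r) ^ k)))"

end

theory Submission
  imports Defs
begin

(* With u = (1 - e^(qt))/q the series S is -ln(1 - u) = u H(u), where H(t) = sum_m t^m/(m+1);
   since 1 - e^(qt) = q u, the generating function of B_j^q(r) is e^(rt) H(u). Expanding
   u^m = (-1/q)^m (e^(qt) - 1)^m binomially gives, for j <= n,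
     B_j^q(r) = sum_(m<=n) (-1/q)^m/(m+1) sum_(i<=m) C(m,i) (-1)^(m-i) (qi + r)^j.
   Pairing with w(n,j) turns (qi + r)^j into q^n (i)_n, which vanishes for i < n, so only
   m = i = n survives and the sum is (-1/q)^n q^n n!/(n+1). *)

unbundle no vec_syntax
unbundle fps_syntax

definition whitney1_poly :: "real \<Rightarrow> real \<Rightarrow> nat \<Rightarrow> real poly" where
  "whitney1_poly q r n = (\<Prod>i<n. [:- (q * of_nat i + r), 1:])"

lemma degree_whitney1_poly_le: "degree (whitney1_poly q r n) \<le> n"
  unfolding whitney1_poly_def
  using degree_prod_sum_le[of "{..<n}" "\<lambda>i. [:- (q * of_nat i + r), 1:]"] by simp

lemma poly_whitney1_poly: "poly (whitney1_poly q r n) (q * x + r) = q ^ n * falling x n"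
  unfolding whitney1_poly_def falling_def poly_prod
  by (simp add: prod.distrib flip: right_diff_distrib)

lemma poly_eq_sum_coeff_atMost:
  fixes p :: "'a::comm_semiring_1 poly"
  assumes "degree p \<le> n"
  shows "poly p y = (\<Sum>k\<le>n. coeff p k * y ^ k)"
proof -
  have "poly p y = (\<Sum>k\<le>degree p. coeff p k * y ^ k)"
    by (rule poly_altdef)
  also have "\<dots> = (\<Sum>k\<le>n. coeff p k * y ^ k)"
    using assms by (intro sum.mono_neutral_left) (auto simp: coeff_eq_0)
  finally show ?thesis .
qed

lemma coeff_eq_if_poly_eq_sum:
  fixes p :: "'a::{idom, ring_char_0} poly"
  assumes "\<forall>k>n. w k = 0" and "\<forall>y. (\<Sum>k\<le>n. w k * y ^ k) = poly p y"
  shows "w = coeff p"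
proof -
  have "poly (\<Sum>k\<le>n. monom (w k) k) = poly p"
    using assms(2) by (simp add: poly_sum poly_monom fun_eq_iff)
  then have "(\<Sum>k\<le>n. monom (w k) k) = p"
    by (simp add: poly_eq_poly_eq_iff)
  then have "coeff p k = (if k \<le> n then w k else 0)" for k
    by (auto simp: coeff_sum coeff_monom)
  with assms(1) show ?thesis
    by (auto simp: not_le)
qed

lemma whitney1_eq_coeff:
  assumes "q \<noteq> 0"
  shows "whitney1 q r n = coeff (whitney1_poly q r n)"
  unfolding whitney1_def
proof (rule the_equality)
  show "(\<forall>k>n. coeff (whitney1_poly q r n) k = 0) \<and>
      (\<forall>x. q ^ n * falling x n = (\<Sum>k\<le>n. coeff (whitney1_poly q r n) k * (q * x + r) ^ k))"
    using degree_whitney1_poly_le[of q r n]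
    by (auto simp: coeff_eq_0 poly_whitney1_poly poly_eq_sum_coeff_atMost[symmetric])
next
  fix w
  assume w: "(\<forall>k>n. w k = 0) \<and> (\<forall>x. q ^ n * falling x n = (\<Sum>k\<le>n. w k * (q * x + r) ^ k))"
  then have "(\<Sum>k\<le>n. w k * (q * x + r) ^ k) = poly (whitney1_poly q r n) (q * x + r)" for x
    by (simp add: poly_whitney1_poly)
  from this[of "(y - r) / q" for y] assms
  have "(\<Sum>k\<le>n. w k * y ^ k) = poly (whitney1_poly q r n) y" for y
    by simp
  with w show "w = coeff (whitney1_poly q r n)"
    by (intro coeff_eq_if_poly_eq_sum[where n = n]) auto
qed

lemma sum_whitney1_power:
  assumes "q \<noteq> 0"
  shows "(\<Sum>k\<le>n. whitney1 q r n k * (q * x + r) ^ k) = q ^ n * falling x n"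
  using degree_whitney1_poly_le[of q r n]
  by (simp add: whitney1_eq_coeff[OF assms] poly_whitney1_poly flip: poly_eq_sum_coeff_atMost)

lemma falling_of_nat_less: "i < n \<Longrightarrow> falling (of_nat i) n = 0"
  unfolding falling_def by (rule prod_zero) auto

lemma falling_of_nat_self: "falling (of_nat n) n = fact n"
  unfolding falling_def fact_prod_rev
  by (simp add: atLeast0LessThan of_nat_diff)

lemma sum_binomial_falling:
  assumes "m \<le> n"
  shows "(\<Sum>i\<le>m. of_nat (m choose i) * (-1) ^ (m - i) * falling (of_nat i) n) =
    (if m = n then fact n else 0)"
proof (cases "m = n")
  case True
  then show ?thesis
    by (simp add: lessThan_Suc_atMost[symmetric] falling_of_nat_less falling_of_nat_self)
next
  case False
  with assms have "m < n"
    by simp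
  then show ?thesis
    by (auto intro!: sum.neutral simp: falling_of_nat_less)
qed

definition fps_recip_Suc :: "'a::field_char_0 fps" where
  "fps_recip_Suc = Abs_fps (\<lambda>m. 1 / of_nat (Suc m))"

lemma bq_u_nth_0: "bq_u q $ 0 = 0"
  by (simp add: bq_u_def)

lemma bq_S_eq_mult_compose: "bq_S q = bq_u q * (fps_recip_Suc oo bq_u q)"
proof -
  have "bq_S q = (fps_X * fps_recip_Suc) oo bq_u q"
  proof (rule fps_ext)
    fix n
    have "(fps_X * fps_recip_Suc oo bq_u q) $ n = (\<Sum>k\<in>{0..n}. (bq_u q ^ k) $ n / of_nat k)"
      unfolding fps_compose_nth by (intro sum.cong) (auto simp: fps_recip_Suc_def)
    also have "\<dots> = bq_S q $ n"
      by (simp add: bq_S_def sum.atLeast_Suc_atMost)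
    finally show "bq_S q $ n = (fps_X * fps_recip_Suc oo bq_u q) $ n" ..
  qed
  then show ?thesis
    by (simp add: fps_compose_mult_distrib bq_u_nth_0)
qed

lemma fps_compose_nth_atMost:
  fixes a b :: "'a::comm_ring_1 fps"
  assumes "b $ 0 = 0" "k \<le> N"
  shows "(a oo b) $ k = (\<Sum>m\<le>N. a $ m * (b ^ m) $ k)"
  unfolding fps_compose_nth atLeast0AtMost using assms
  by (intro sum.mono_neutral_left) (auto simp: startsby_zero_power_prefix)

lemma fps_mult_compose_nth:
  fixes a b h :: "'a::comm_ring_1 fps"
  assumes "b $ 0 = 0" "j \<le> N"
  shows "(h * (a oo b)) $ j = (\<Sum>m\<le>N. a $ m * (h * b ^ m) $ j)"
proof -
  have "(h * (a oo b)) $ j = (\<Sum>i=0..j. \<Sum>m\<le>N. h $ i * (a $ m * (b ^ m) $ (j - i)))"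
    unfolding fps_mult_nth using assms
    by (intro sum.cong refl) (simp add: fps_compose_nth_atMost[where N = N] sum_distrib_left)
  also have "\<dots> = (\<Sum>m\<le>N. a $ m * (h * b ^ m) $ j)"
    by (subst sum.swap) (simp add: fps_mult_nth sum_distrib_left mult_ac)
  finally show ?thesis .
qed

lemma fps_exp_mult_exp_minus_one_power_nth:
  fixes q r :: "'a::field_char_0"
  shows "fact j * (fps_exp r * (fps_exp q - 1) ^ m) $ j =
    (\<Sum>i\<le>m. of_nat (m choose i) * (-1) ^ (m - i) * (q * of_nat i + r) ^ j)"
proof -
  have minus_one: "fps_exp q - 1 = fps_exp q + fps_const (-1 :: 'a)"
    by simp
  have "fps_exp r * (fps_exp q - 1) ^ m =
      (\<Sum>i\<le>m. fps_const (of_nat (m choose i) * (-1) ^ (m - i)) * fps_exp (q * of_nat i + r))"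
    unfolding minus_one binomial_ring sum_distrib_left
    by (simp only: fps_const_mult[symmetric] fps_of_nat[symmetric] fps_const_power
        fps_exp_power_mult fps_exp_add_mult mult_ac)
  then show ?thesis
    by (simp add: fps_sum_nth sum_distrib_left)
qed

lemma bq_egf_eq_exp_mult_compose:
  assumes "q \<noteq> 0"
  shows "bq_egf q r = fps_exp r * (fps_recip_Suc oo bq_u q)"
proof -
  have denom: "1 - fps_exp q = fps_const q * bq_u q"
    using assms by (simp add: bq_u_def flip: mult.assoc)
  have denom_nonzero: "1 - fps_exp q \<noteq> (0 :: real fps)"
  proof
    assume "1 - fps_exp q = (0 :: real fps)"
    then have "(1 - fps_exp q) $ 1 = (0 :: real fps) $ 1" by simp
    with assms show False by simp
  qed
  have "fps_const q * fps_exp r * bq_S q = (1 - fps_exp q) * (fps_exp r * (fps_recip_Suc oo bq_u q))"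
    unfolding denom bq_S_eq_mult_compose by (simp only: mult_ac)
  then show ?thesis
    unfolding bq_egf_def using denom_nonzero by (metis nonzero_mult_div_cancel_left)
qed

lemma bernoulli_q_eq_sum:
  assumes "q \<noteq> 0" "j \<le> n"
  shows "bernoulli_q q j r = (\<Sum>m\<le>n. (-1 / q) ^ m / of_nat (Suc m) *
    (\<Sum>i\<le>m. of_nat (m choose i) * (-1) ^ (m - i) * (q * of_nat i + r) ^ j))"
proof -
  have u: "bq_u q = fps_const (-1 / q) * (fps_exp q - 1)"
    unfolding bq_u_def by (rule fps_ext) (simp add: field_simps)
  have "bernoulli_q q j r = (\<Sum>m\<le>n. 1 / of_nat (Suc m) * (fact j * (fps_exp r * bq_u q ^ m) $ j))"
    unfolding bernoulli_q_def bq_egf_eq_exp_mult_compose[OF assms(1)] fps_mult_compose_nth[OF bq_u_nth_0 assms(2)]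
    by (simp add: fps_recip_Suc_def sum_distrib_left mult_ac)
  also have "\<dots> = (\<Sum>m\<le>n. (-1 / q) ^ m / of_nat (Suc m) *
      (\<Sum>i\<le>m. of_nat (m choose i) * (-1) ^ (m - i) * (q * of_nat i + r) ^ j))"
    unfolding u power_mult_distrib fps_const_power mult.left_commute[of "fps_exp r"]
      fps_mult_left_const_nth mult.left_commute[of "fact j"] fps_exp_mult_exp_minus_one_power_nth
    by simp
  finally show ?thesis .
qed

lemma sum_mult_bernoulli_q:
  assumes "q \<noteq> 0"
  shows "(\<Sum>j\<le>n. w j * bernoulli_q q j r) = (\<Sum>m\<le>n. (-1 / q) ^ m / of_nat (Suc m) *
    (\<Sum>i\<le>m. of_nat (m choose i) * (-1) ^ (m - i) * (\<Sum>j\<le>n. w j * (q * of_nat i + r) ^ j)))"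
proof -
  have "(\<Sum>j\<le>n. w j * bernoulli_q q j r) = (\<Sum>j\<le>n. \<Sum>m\<le>n. \<Sum>i\<le>m. (-1 / q) ^ m / of_nat (Suc m) *
      (of_nat (m choose i) * (-1) ^ (m - i) * (w j * (q * of_nat i + r) ^ j)))"
    by (intro sum.cong refl) (simp add: bernoulli_q_eq_sum[OF assms] sum_distrib_left mult_ac)
  also have "\<dots> = (\<Sum>m\<le>n. \<Sum>i\<le>m. \<Sum>j\<le>n. (-1 / q) ^ m / of_nat (Suc m) *
      (of_nat (m choose i) * (-1) ^ (m - i) * (w j * (q * of_nat i + r) ^ j)))"
    by (subst sum.swap) (intro sum.cong refl sum.swap)
  finally show ?thesis
    by (simp add: sum_distrib_left)
qed

theorem mainTheorem2:
  fixes q r :: real and n :: nat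
  assumes "q > 0" and "r \<ge> 0"
  shows "(\<Sum>j\<le>n. (-1) ^ n * whitney1 q r n j * bernoulli_q q j r) = fact n / (of_nat n + 1)"
proof -
  have q: "q \<noteq> 0"
    using assms(1) by simp
  have "(\<Sum>j\<le>n. whitney1 q r n j * bernoulli_q q j r) = (\<Sum>m\<le>n. (-1 / q) ^ m / of_nat (Suc m) *
      (\<Sum>i\<le>m. of_nat (m choose i) * (-1) ^ (m - i) * (q ^ n * falling (of_nat i) n)))"
    unfolding sum_mult_bernoulli_q[OF q] sum_whitney1_power[OF q] ..
  also have "\<dots> = (\<Sum>m\<le>n. (-1 / q) ^ m / of_nat (Suc m) * q ^ n *
      (\<Sum>i\<le>m. of_nat (m choose i) * (-1) ^ (m - i) * falling (of_nat i) n))"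
    by (simp add: sum_distrib_left mult_ac)
  also have "\<dots> = (\<Sum>m\<le>n. if m = n then (-1 / q) ^ n / of_nat (Suc n) * q ^ n * fact n else 0)"
    by (intro sum.cong refl) (auto simp: sum_binomial_falling)
  also have "\<dots> = (-1 / q) ^ n / of_nat (Suc n) * q ^ n * fact n"
    by simp
  also have "\<dots> = (-1) ^ n * (fact n / (of_nat n + 1))"
    using q by (simp add: field_simps flip: power_mult_distrib)
  finally show ?thesis
    by (simp add: mult.assoc flip: sum_distrib_left)
qed

end
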